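(* If $\mathfrak{F}=(X,R,Q)$ is a finite $\mathsf{MIPC}$-frame, then there is a finite $\mathsf{MS4}$-frame $\mathfrak{G}$ validating $\mathsf{LKur}=\mathsf{MS4}+\Box\forall\Diamond\Box p\to\Diamond\forall p$ such that $\mathfrak{F}$ is isomorphic to the skeleton $\rho\mathfrak{G}$.
   Context: An $\mathsf{MIPC}$-frame is $(X,R,Q)$ with $R$ a partial order, $Q$ a quasi-order, $R\subseteq Q$, and $xQy$ implying $\exists z$ with $xRz$ and $zE_Qy$, where $xE_Qy$ iff $xQy$ and $yQx$. An isomorphism of $\mathsf{MIPC}$-frames is a bijection preserving and reflecting $R$ and $Q$. An $\mathsf{MS4}$-frame is $(Y,R,E)$ with $R$ a quasi-order, $E$ an equivalence relation, such that $xEy$, $yRz$ imply $\exists u$ with $xRu$, $uEz$. $\mathsf{MS4}$ is the smallest set of formulas in the classical bimodal language $\mathcal{L}_{\Box\forall}$ containing all classical tautologies, the $\mathsf{S4}$ axioms for $\Box$, the $\mathsf{S5}$ axioms for $\forall$, and $\Box\forall p\to\forall\Box p$, closed under modus ponens, substitution, $\Box$- and $\forall$-necessitation; $\Diamond=\neg\Box\neg$. Formulas are evaluated on $\mathsf{MS4}$-frames with $\Box$ via $R$ and $\forall$ via $E$. Skeleton of $\mathfrak{G}=(Y,R,E)$: with $xE_Ry$ iff $xRy$ and $yRx$, $X'=Y/E_R$ with quotient map $\pi$; $Q=E\circ R$ ($xQy$ iff $\exists z$: $xRz$, $zEy$); $\rho\mathfrak{G}=(X',R',Q')$ with $\pi(x)R'\pi(y)$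 iff $xRy$ and $\pi(x)Q'\pi(y)$ iff $xQy$. *)

theory Defs
  imports Main
begin

definition mipc_frame :: "'a set \<Rightarrow> 'a rel \<Rightarrow> 'a rel \<Rightarrow> bool" where
  "mipc_frame X R Q \<longleftrightarrow>
     R \<subseteq> X \<times> X \<and> Q \<subseteq> X \<times> X \<and>
     (\<forall>x\<in>X. (x, x) \<in> R) \<and> trans R \<and> antisym R \<and>
     (\<forall>x\<in>X. (x, x) \<in> Q) \<and> trans Q \<and>
     R \<subseteq> Q \<and>
     (\<forall>x y. (x, y) \<in> Q \<longrightarrow> (\<exists>z. (x, z) \<in> R \<and> (z, y) \<in> Q \<and> (y, z) \<in> Q))"

definition ms4_frame :: "'b set \<Rightarrow> 'b rel \<Rightarrow> 'b rel \<Rightarrow> bool" where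
  "ms4_frame Y R E \<longleftrightarrow>
     R \<subseteq> Y \<times> Y \<and> (\<forall>x\<in>Y. (x, x) \<in> R) \<and> trans R \<and>
     equiv Y E \<and>
     (\<forall>x y z. (x, y) \<in> E \<longrightarrow> (y, z) \<in> R \<longrightarrow> (\<exists>u. (x, u) \<in> R \<and> (u, z) \<in> E))"

definition mipc_iso :: "('a \<Rightarrow> 'c) \<Rightarrow> 'a set \<Rightarrow> 'a rel \<Rightarrow> 'a rel \<Rightarrow> 'c set \<Rightarrow> 'c rel \<Rightarrow> 'c rel \<Rightarrow> bool" where
  "mipc_iso f X R Q X' R' Q' \<longleftrightarrow>
     bij_betw f X X' \<and>
     (\<forall>x\<in>X. \<forall>y\<in>X. ((x, y) \<in> R \<longleftrightarrow> (f x, f y) \<in> R') \<and> ((x, y) \<in> Q \<longleftrightarrow> (f x, f y) \<in> Q'))"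

definition ER :: "'b rel \<Rightarrow> 'b rel" where
  "ER R = {(x, y). (x, y) \<in> R \<and> (y, x) \<in> R}"

definition skel_proj :: "'b set \<Rightarrow> 'b rel \<Rightarrow> 'b \<Rightarrow> 'b set" where
  "skel_proj Y R x = ER R `` {x}"

definition skel_carrier :: "'b set \<Rightarrow> 'b rel \<Rightarrow> 'b set set" where
  "skel_carrier Y R = Y // ER R"

text \<open>Q = E o R in the paper's notation: x Q y iff exists z with x R z and z E y.\<close>
definition skel_Q0 :: "'b rel \<Rightarrow> 'b rel \<Rightarrow> 'b rel" where
  "skel_Q0 R E = {(x, y). \<exists>z. (x, z) \<in> R \<and> (z, y) \<in> E}"

definition skel_R :: "'b set \<Rightarrow> 'b rel \<Rightarrow> 'b set rel" where
  "skel_R Y R = {(skel_proj Y R x, skel_proj Y R y) | x y. x \<in> Y \<and> y \<in> Y \<and> (x, y) \<in> R}"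

definition skel_Q :: "'b set \<Rightarrow> 'b rel \<Rightarrow> 'b rel \<Rightarrow> 'b set rel" where
  "skel_Q Y R E = {(skel_proj Y R x, skel_proj Y R y) | x y. x \<in> Y \<and> y \<in> Y \<and> (x, y) \<in> skel_Q0 R E}"

datatype fm = Var nat | Bot | Imp fm fm | Box fm | Univ fm

definition Neg :: "fm \<Rightarrow> fm" where "Neg p = Imp p Bot"
definition Dia :: "fm \<Rightarrow> fm" where "Dia p = Neg (Box (Neg p))"
definition Exi :: "fm \<Rightarrow> fm" where "Exi p = Neg (Univ (Neg p))"

text \<open>Propositional evaluation treating modalised subformulas as atoms;
  classical tautologies of the bimodal language are the formulas true under
  every such evaluation (i.e. substitution instances of propositional tautologies).\<close>
fun peval :: "(fm \<Rightarrow> bool) \<Rightarrow> fm \<Rightarrow> bool" where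
  "peval v (Var n) = v (Var n)"
| "peval v Bot = False"
| "peval v (Imp p q) = (peval v p \<longrightarrow> peval v q)"
| "peval v (Box p) = v (Box p)"
| "peval v (Univ p) = v (Univ p)"

definition tautology :: "fm \<Rightarrow> bool" where
  "tautology p \<longleftrightarrow> (\<forall>v. peval v p)"

fun subst :: "(nat \<Rightarrow> fm) \<Rightarrow> fm \<Rightarrow> fm" where
  "subst s (Var n) = s n"
| "subst s Bot = Bot"
| "subst s (Imp p q) = Imp (subst s p) (subst s q)"
| "subst s (Box p) = Box (subst s p)"
| "subst s (Univ p) = Univ (subst s p)"

abbreviation "P0 \<equiv> Var 0"
abbreviation "P1 \<equiv> Var 1"

inductive_set LKur :: "fm set" where
  taut: "tautology p \<Longrightarrow> p \<in> LKur"
| boxK: "Imp (Box (Imp P0 P1)) (Imp (Box P0) (Box P1)) \<in> LKur"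
| boxT: "Imp (Box P0) P0 \<in> LKur"
| box4: "Imp (Box P0) (Box (Box P0)) \<in> LKur"
| allK: "Imp (Univ (Imp P0 P1)) (Imp (Univ P0) (Univ P1)) \<in> LKur"
| allT: "Imp (Univ P0) P0 \<in> LKur"
| all4: "Imp (Univ P0) (Univ (Univ P0)) \<in> LKur"
| all5: "Imp (Exi P0) (Univ (Exi P0)) \<in> LKur"
| lcomm: "Imp (Box (Univ P0)) (Univ (Box P0)) \<in> LKur"
| kur: "Imp (Box (Univ (Dia (Box P0)))) (Dia (Univ P0)) \<in> LKur"
| mp: "p \<in> LKur \<Longrightarrow> Imp p q \<in> LKur \<Longrightarrow> q \<in> LKur"
| sub: "p \<in> LKur \<Longrightarrow> subst s p \<in> LKur"
| nec_box: "p \<in> LKur \<Longrightarrow> Box p \<in> LKur"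
| nec_all: "p \<in> LKur \<Longrightarrow> Univ p \<in> LKur"

fun sat :: "'b rel \<Rightarrow> 'b rel \<Rightarrow> (nat \<Rightarrow> 'b set) \<Rightarrow> 'b \<Rightarrow> fm \<Rightarrow> bool" where
  "sat R E V x (Var n) = (x \<in> V n)"
| "sat R E V x Bot = False"
| "sat R E V x (Imp p q) = (sat R E V x p \<longrightarrow> sat R E V x q)"
| "sat R E V x (Box p) = (\<forall>y. (x, y) \<in> R \<longrightarrow> sat R E V y p)"
| "sat R E V x (Univ p) = (\<forall>y. (x, y) \<in> E \<longrightarrow> sat R E V y p)"

definition frame_valid :: "'b set \<Rightarrow> 'b rel \<Rightarrow> 'b rel \<Rightarrow> fm \<Rightarrow> bool" where
  "frame_valid Y R E p \<longleftrightarrow> (\<forall>V. \<forall>x\<in>Y. sat R E V x p)"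

definition validates_logic :: "'b set \<Rightarrow> 'b rel \<Rightarrow> 'b rel \<Rightarrow> fm set \<Rightarrow> bool" where
  "validates_logic Y R E L \<longleftrightarrow> (\<forall>p\<in>L. frame_valid Y R E p)"

end

theory Submission
  imports Defs
begin

text \<open>Build \<open>Y\<close> from two layers over \<open>X\<close>: a lower copy of every point and an upper copy of
  every \<open>R\<close>-maximal point. \<open>R\<close> is pulled back along the projection to \<open>X\<close>, and \<open>E\<close> relates
  points of the same layer whose images are \<open>E\<^sub>Q\<close>-equivalent. Since \<open>R\<close> is antisymmetric,
  the clusters of the pulled-back relation are exactly the fibres, so the skeleton
  recovers \<open>X\<close> and \<open>R\<close>. The MIPC condition makes \<open>E \<circ> R\<close> the pullback of \<open>Q\<close>
  (for upper points one moves on to a maximal point of the same \<open>E\<^sub>Q\<close>-cluster), which gives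
  both the MS4 commutation law and the skeleton's \<open>Q\<close>. Finally, every point sees an upper
  point, whose \<open>E\<close>-class lies over maximal points only; so \<open>\<box>\<forall>\<diamond>\<box>p\<close> forces \<open>p\<close> on that
  whole class, which validates \<open>\<box>\<forall>\<diamond>\<box>p \<rightarrow> \<diamond>\<forall>p\<close>.\<close>

definition rel_maximal :: "'a rel \<Rightarrow> 'a \<Rightarrow> bool" where
  "rel_maximal R x \<longleftrightarrow> (\<forall>y. (x, y) \<in> R \<longrightarrow> (y, x) \<in> R)"

lemma peval_sat: "peval (sat S E V x) p = sat S E V x p"
  by (induction p) auto

lemma sat_subst: "sat S E V x (subst s p) = sat S E (\<lambda>n. {y. sat S E V y (s n)}) x p"
  by (induction p arbitrary: x) auto

lemma sat_kur:
  assumes "(x, b) \<in> S" and "\<forall>c. (b, c) \<in> E \<longrightarrow> rel_maximal S c"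
  shows "sat S E V x (Imp (Box (Univ (Dia (Box P0)))) (Dia (Univ P0)))"
proof (simp only: sat.simps(3), rule impI)
  assume hyp: "sat S E V x (Box (Univ (Dia (Box P0))))"
  have "sat S E V c P0" if "(b, c) \<in> E" for c
  proof -
    have "sat S E V c (Dia (Box P0))" using hyp assms(1) that by simp
    then obtain d where "(c, d) \<in> S" and "sat S E V d (Box P0)"
      by (auto simp: Dia_def Neg_def)
    moreover have "(d, c) \<in> S"
      using assms(2) that \<open>(c, d) \<in> S\<close> unfolding rel_maximal_def by blast
    ultimately show ?thesis by simp
  qed
  then show "sat S E V x (Dia (Univ P0))"
    using assms(1) by (auto simp: Dia_def Neg_def)
qed

lemma validates_LKur:
  assumes frame: "ms4_frame Y S E"
    and sees_maximal: "\<And>a. a \<in> Y \<Longrightarrow> \<exists>b. (a, b) \<in> S \<and> (\<forall>c. (b, c) \<in> E \<longrightarrow> rel_maximal S c)"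
  shows "validates_logic Y S E LKur"
  unfolding validates_logic_def
proof
  fix p assume "p \<in> LKur"
  from frame have S_Y: "S \<subseteq> Y \<times> Y" and S_refl: "\<forall>x\<in>Y. (x, x) \<in> S" and "trans S"
    and "equiv Y E" and comm: "\<forall>x y z. (x, y) \<in> E \<longrightarrow> (y, z) \<in> S \<longrightarrow> (\<exists>u. (x, u) \<in> S \<and> (u, z) \<in> E)"
    unfolding ms4_frame_def by auto
  from \<open>equiv Y E\<close> have E_Y: "E \<subseteq> Y \<times> Y" and E_refl: "\<forall>x\<in>Y. (x, x) \<in> E"
    and "sym E" and "trans E"
    unfolding equiv_def refl_on_def by auto
  show "frame_valid Y S E p" using \<open>p \<in> LKur\<close> unfolding frame_valid_def
  proof (induction p rule: LKur.induct)
    case (taut p)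
    then show ?case by (metis peval_sat tautology_def)
  next
    case box4
    then show ?case using \<open>trans S\<close> by (auto dest: transD)
  next
    case all4
    then show ?case using \<open>trans E\<close> by (auto dest: transD)
  next
    case all5
    then show ?case using \<open>trans E\<close> \<open>sym E\<close> by (auto simp: Exi_def Neg_def dest: symD transD)
  next
    case lcomm
    then show ?case using comm by fastforce
  next
    case kur
    then show ?case using sees_maximal sat_kur by metis
  next
    case (sub p s)
    then show ?case by (simp add: sat_subst)
  qed (use S_Y S_refl E_Y E_refl in auto)
qed

lemma finite_preorder_maximal_above:
  assumes "finite X" and "R \<subseteq> X \<times> X" and "\<forall>x\<in>X. (x, x) \<in> R" and "trans R" and "x \<in> X"
  shows "\<exists>w. (x, w) \<in> R \<and> rel_maximal R w"
proof -
  obtain w where xw: "(x, w) \<in> R"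
    and least: "\<forall>u. (x, u) \<in> R \<longrightarrow> card (R `` {w}) \<le> card (R `` {u})"
    using ex_has_least_nat[where P = "\<lambda>u. (x, u) \<in> R" and m = "\<lambda>u. card (R `` {u})"]
      assms(3,5) by blast
  have "(u, w) \<in> R" if wu: "(w, u) \<in> R" for u
  proof -
    have "finite (R `` {w})"
      using \<open>finite X\<close> \<open>R \<subseteq> X \<times> X\<close> by (blast intro: finite_subset)
    moreover have "R `` {u} \<subseteq> R `` {w}" using wu \<open>trans R\<close> by (auto dest: transD)
    moreover have "card (R `` {w}) \<le> card (R `` {u})"
      using least xw wu \<open>trans R\<close> by (blast dest: transD)
    ultimately have "R `` {u} = R `` {w}" by (rule card_seteq)
    moreover have "(w, w) \<in> R" using xw assms(2,3) by blast
    ultimately show ?thesis by blast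
  qed
  then show ?thesis using xw unfolding rel_maximal_def by blast
qed

lemma mipc_frame_Q_maximal_witness:
  assumes "finite X" and frame: "mipc_frame X R Q"
    and "(x, y) \<in> Q" and "rel_maximal R y"
  shows "\<exists>v. (x, v) \<in> R \<and> (v, y) \<in> Q \<and> (y, v) \<in> Q \<and> rel_maximal R v"
proof -
  from frame have "R \<subseteq> X \<times> X" and "\<forall>x\<in>X. (x, x) \<in> R" and "trans R" and "trans Q"
    and "R \<subseteq> Q" and witness: "\<And>x y. (x, y) \<in> Q \<Longrightarrow> \<exists>z. (x, z) \<in> R \<and> (z, y) \<in> Q \<and> (y, z) \<in> Q"
    unfolding mipc_frame_def by blast+
  obtain v where xv: "(x, v) \<in> R" and "(y, v) \<in> Q" using witness \<open>(x, y) \<in> Q\<close> by blast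
  obtain w where vw: "(v, w) \<in> R" and w_max: "rel_maximal R w"
    using finite_preorder_maximal_above[OF \<open>finite X\<close> \<open>R \<subseteq> X \<times> X\<close>] xv
      \<open>R \<subseteq> X \<times> X\<close> \<open>\<forall>x\<in>X. (x, x) \<in> R\<close> \<open>trans R\<close> by blast
  have yw: "(y, w) \<in> Q" using \<open>(y, v) \<in> Q\<close> vw \<open>R \<subseteq> Q\<close> \<open>trans Q\<close> by (blast dest: transD)
  then obtain y' where "(y, y') \<in> R" and "(w, y') \<in> Q" using witness by blast
  \<comment> \<open>maximality of y pulls the witness y' back into the cluster of y\<close>
  then have "(w, y) \<in> Q"
    using \<open>rel_maximal R y\<close> \<open>R \<subseteq> Q\<close> \<open>trans Q\<close> unfolding rel_maximal_def by (blast dest: transD)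
  moreover have "(x, w) \<in> R" using xv vw \<open>trans R\<close> by (blast dest: transD)
  ultimately show ?thesis using yw w_max by blast
qed

lemma skel_proj_pullback:
  assumes "S = {(a, b). a \<in> Y \<and> b \<in> Y \<and> (pt a, pt b) \<in> R}"
    and "antisym R" and "(pt a, pt a) \<in> R" and "a \<in> Y"
  shows "skel_proj Y S a = {b \<in> Y. pt b = pt a}"
  using assms unfolding skel_proj_def ER_def by (auto dest: antisymD)

lemma mipc_iso_skeleton_pullback:
  fixes pt :: "'b \<Rightarrow> 'a"
  assumes S_def: "S = {(a, b). a \<in> Y \<and> b \<in> Y \<and> (pt a, pt b) \<in> R}"
    and surj: "pt ` Y = X" and R_refl: "\<forall>x\<in>X. (x, x) \<in> R" and "antisym R"
    and Q0_iff: "\<And>a b. a \<in> Y \<Longrightarrow> b \<in> Y \<Longrightarrow> (a, b) \<in> skel_Q0 S E \<longleftrightarrow> (pt a, pt b) \<in> Q"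
  shows "mipc_iso (\<lambda>x. {a \<in> Y. pt a = x}) X R Q (skel_carrier Y S) (skel_R Y S) (skel_Q Y S E)"
proof -
  define fibre where "fibre x = {a \<in> Y. pt a = x}" for x
  have proj: "skel_proj Y S a = fibre (pt a)" if "a \<in> Y" for a
    using skel_proj_pullback[OF S_def \<open>antisym R\<close>] R_refl surj that unfolding fibre_def by blast
  have "inj_on fibre X"
    using surj unfolding fibre_def by (intro inj_onI) blast
  then have fibre_eq: "fibre (pt a) = fibre x \<longleftrightarrow> pt a = x" if "a \<in> Y" "x \<in> X" for a x
    using surj that by (blast dest: inj_onD)
  have lift_iff: "(fibre x, fibre y) \<in> {(skel_proj Y S a, skel_proj Y S b) | a b.
                     a \<in> Y \<and> b \<in> Y \<and> (pt a, pt b) \<in> T} \<longleftrightarrow> (x, y) \<in> T"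
    if "x \<in> X" "y \<in> X" for x y and T :: "'a rel"
    using that surj proj fibre_eq by auto
  have "skel_carrier Y S = fibre ` X"
    unfolding skel_carrier_def quotient_def surj[symmetric]
    using proj unfolding skel_proj_def by auto
  moreover have "skel_R Y S = {(skel_proj Y S a, skel_proj Y S b) | a b.
                     a \<in> Y \<and> b \<in> Y \<and> (pt a, pt b) \<in> R}"
    unfolding skel_R_def S_def by blast
  moreover have "skel_Q Y S E = {(skel_proj Y S a, skel_proj Y S b) | a b.
                     a \<in> Y \<and> b \<in> Y \<and> (pt a, pt b) \<in> Q}"
    unfolding skel_Q_def using Q0_iff by blast
  ultimately show ?thesis
    using \<open>inj_on fibre X\<close> lift_iff unfolding mipc_iso_def bij_betw_def fibre_def by simp
qed

locale mipc_layered_cover =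
  fixes X :: "'a set" and R Q :: "'a rel"
    and Y :: "'b set" and pt :: "'b \<Rightarrow> 'a" and upper :: "'b \<Rightarrow> bool"
  assumes finite_X: "finite X" and frame: "mipc_frame X R Q"
    and pt_Y: "pt ` Y \<subseteq> X"
    and lower_copy: "x \<in> X \<Longrightarrow> \<exists>a\<in>Y. pt a = x \<and> \<not> upper a"
    and upper_copy: "x \<in> X \<Longrightarrow> rel_maximal R x \<Longrightarrow> \<exists>a\<in>Y. pt a = x \<and> upper a"
    and upper_maximal: "a \<in> Y \<Longrightarrow> upper a \<Longrightarrow> rel_maximal R (pt a)"
begin

definition cover_R :: "'b rel" where
  "cover_R = {(a, b). a \<in> Y \<and> b \<in> Y \<and> (pt a, pt b) \<in> R}"

definition cover_E :: "'b rel" where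
  "cover_E = {(a, b). a \<in> Y \<and> b \<in> Y \<and> (upper a \<longleftrightarrow> upper b) \<and> (pt a, pt b) \<in> Q \<and> (pt b, pt a) \<in> Q}"

lemma R_X: "R \<subseteq> X \<times> X" and R_refl: "\<forall>x\<in>X. (x, x) \<in> R" and trans_R: "trans R"
  and antisym_R: "antisym R" and Q_refl: "\<forall>x\<in>X. (x, x) \<in> Q" and trans_Q: "trans Q"
  and R_Q: "R \<subseteq> Q"
  and Q_witness: "(x, y) \<in> Q \<Longrightarrow> \<exists>z. (x, z) \<in> R \<and> (z, y) \<in> Q \<and> (y, z) \<in> Q"
  using frame unfolding mipc_frame_def by blast+

lemma skel_Q0_cover_iff:
  assumes "a \<in> Y" and "b \<in> Y"
  shows "(a, b) \<in> skel_Q0 cover_R cover_E \<longleftrightarrow> (pt a, pt b) \<in> Q"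
proof
  assume "(a, b) \<in> skel_Q0 cover_R cover_E"
  then obtain c where "(pt a, pt c) \<in> R" and "(pt c, pt b) \<in> Q"
    unfolding skel_Q0_def cover_R_def cover_E_def by blast
  then show "(pt a, pt b) \<in> Q" using R_Q trans_Q by (blast dest: transD)
next
  assume ab: "(pt a, pt b) \<in> Q"
  obtain v where av: "(pt a, v) \<in> R" and "(v, pt b) \<in> Q" and "(pt b, v) \<in> Q"
    and "upper b \<longrightarrow> rel_maximal R v"
  proof (cases "upper b")
    case True
    then show ?thesis
      using that mipc_frame_Q_maximal_witness[OF finite_X frame ab] upper_maximal \<open>b \<in> Y\<close> by blast
  next
    case False
    then show ?thesis using that Q_witness[OF ab] by blast
  qed
  moreover have "v \<in> X" using av R_X by blast
  ultimately obtain c where "c \<in> Y" "pt c = v" "upper c \<longleftrightarrow> upper b"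
    using lower_copy upper_copy by metis
  then show "(a, b) \<in> skel_Q0 cover_R cover_E"
    using assms av \<open>(v, pt b) \<in> Q\<close> \<open>(pt b, v) \<in> Q\<close>
    unfolding skel_Q0_def cover_R_def cover_E_def by blast
qed

lemma ms4_frame_cover: "ms4_frame Y cover_R cover_E"
proof -
  have "equiv Y cover_E"
    using pt_Y Q_refl trans_Q
    unfolding cover_E_def by (intro equivI refl_onI symI transI) (auto dest: transD)
  moreover have "\<exists>u. (a, u) \<in> cover_R \<and> (u, c) \<in> cover_E"
    if "(a, b) \<in> cover_E" and "(b, c) \<in> cover_R" for a b c
  proof -
    have "(pt a, pt c) \<in> Q" "a \<in> Y" "c \<in> Y"
      using that R_Q trans_Q unfolding cover_E_def cover_R_def by (auto dest: transD)
    then show ?thesis using skel_Q0_cover_iff unfolding skel_Q0_def by blast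
  qed
  ultimately show ?thesis
    using pt_Y R_refl trans_R unfolding ms4_frame_def cover_R_def
    by (auto intro: transI dest: transD)
qed

lemma cover_sees_maximal_cluster:
  assumes "a \<in> Y"
  shows "\<exists>b. (a, b) \<in> cover_R \<and> (\<forall>c. (b, c) \<in> cover_E \<longrightarrow> rel_maximal cover_R c)"
proof -
  obtain w where aw: "(pt a, w) \<in> R" and "rel_maximal R w"
    using finite_preorder_maximal_above[OF finite_X R_X R_refl trans_R] pt_Y assms by blast
  moreover have "w \<in> X" using aw R_X by blast
  ultimately obtain b where "b \<in> Y" "pt b = w" "upper b" using upper_copy by blast
  moreover have "rel_maximal cover_R c" if "(b, c) \<in> cover_E" for c
    using that \<open>upper b\<close> upper_maximal
    unfolding cover_E_def cover_R_def rel_maximal_def by blast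
  ultimately show ?thesis using assms aw unfolding cover_R_def by blast
qed

lemma validates_LKur_cover: "validates_logic Y cover_R cover_E LKur"
  using validates_LKur[OF ms4_frame_cover cover_sees_maximal_cluster] .

lemma mipc_iso_skeleton_cover:
  "mipc_iso (\<lambda>x. {a \<in> Y. pt a = x}) X R Q
     (skel_carrier Y cover_R) (skel_R Y cover_R) (skel_Q Y cover_R cover_E)"
proof (rule mipc_iso_skeleton_pullback[OF cover_R_def _ R_refl antisym_R skel_Q0_cover_iff])
  show "pt ` Y = X" using pt_Y lower_copy by blast
qed

end

lemma finite_two_layer_nat_cover:
  assumes "finite X" and "M \<subseteq> X"
  shows "\<exists>(Y :: nat set) pt upper. finite Y \<and> pt ` Y \<subseteq> X \<and>
           (\<forall>x\<in>X. \<exists>a\<in>Y. pt a = x \<and> \<not> upper a) \<and> (\<forall>x\<in>M. \<exists>a\<in>Y. pt a = x \<and> upper a) \<and>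
           (\<forall>a\<in>Y. upper a \<longrightarrow> pt a \<in> M)"
proof -
  obtain h :: "'a \<Rightarrow> nat" where "inj_on h X"
    using finite_imp_inj_to_nat_seg[OF \<open>finite X\<close>] by blast
  define Y where "Y = (\<lambda>x. 2 * h x) ` X \<union> (\<lambda>x. 2 * h x + 1) ` M"
  define pt where "pt n = inv_into X h (n div 2)" for n
  have pt_even: "pt (2 * h x) = x" and pt_odd: "pt (2 * h x + 1) = x" if "x \<in> X" for x
    using \<open>inj_on h X\<close> that unfolding pt_def by simp_all
  have "finite Y" unfolding Y_def using assms finite_subset by blast
  moreover have "pt ` Y \<subseteq> X" unfolding Y_def using pt_even pt_odd assms(2) by auto
  moreover have "\<exists>a\<in>Y. pt a = x \<and> even a" if "x \<in> X" for x
    using that pt_even unfolding Y_def by (intro bexI[of _ "2 * h x"]) auto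
  moreover have "\<exists>a\<in>Y. pt a = x \<and> odd a" if "x \<in> M" for x
    using that pt_odd assms(2) unfolding Y_def by (intro bexI[of _ "2 * h x + 1"]) auto
  moreover have "\<forall>a\<in>Y. odd a \<longrightarrow> pt a \<in> M"
    unfolding Y_def using pt_odd assms(2) by auto
  ultimately show ?thesis by (intro exI[of _ Y] exI[of _ pt] exI[of _ odd]) blast
qed

theorem lemma5p1:
  fixes X :: "'a set" and R Q :: "'a rel"
  assumes "finite X" and "mipc_frame X R Q"
  shows "\<exists>(Y :: nat set) S E. finite Y \<and> ms4_frame Y S E \<and> validates_logic Y S E LKur \<and>
           (\<exists>f. mipc_iso f X R Q (skel_carrier Y S) (skel_R Y S) (skel_Q Y S E))"
proof -
  obtain Y :: "nat set" and pt upper where "finite Y" and "pt ` Y \<subseteq> X"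
    and "\<forall>x\<in>X. \<exists>a\<in>Y. pt a = x \<and> \<not> upper a"
    and "\<forall>x\<in>{x \<in> X. rel_maximal R x}. \<exists>a\<in>Y. pt a = x \<and> upper a"
    and "\<forall>a\<in>Y. upper a \<longrightarrow> pt a \<in> {x \<in> X. rel_maximal R x}"
    using finite_two_layer_nat_cover[OF \<open>finite X\<close>, of "{x \<in> X. rel_maximal R x}"] by blast
  then interpret mipc_layered_cover X R Q Y pt upper
    using assms by unfold_locales auto
  show ?thesis
    using \<open>finite Y\<close> ms4_frame_cover validates_LKur_cover mipc_iso_skeleton_cover by blast
qed

end
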